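(* Let $(G,r,k,c,\pi)$ be an instance of $k$-PCST with optimal value $\mathrm{OPT}$, and run the algorithm $\mathcal{A}$ described below on it. If $\mathcal{A}$ terminates at Step 3, then its output $F_{\mathrm{OUT}}=(V_{\mathrm{OUT}},E_{\mathrm{OUT}})$ is a feasible solution of the $k$-PCST instance and satisfies \[ \sum_{e\in E_{\mathrm{OUT}}}c(e)+\sum_{v\notin V_{\mathrm{OUT}}}\pi(v)\le 4\,\mathrm{OPT}. \]
   Context: An instance of $k$-PCST consists of an undirected connected graph $G=(V,E)$, a root $r\in V$, an integer $k$, a nonnegative edge cost $c:E\to\mathbb{R}_+$ and a nonnegative penalty $\pi:V\to\mathbb{R}_+$. A feasible solution is a subtree $F=(V_F,E_F)$ of $G$ with $r\in V_F$ and $|V_F|\ge k$, of cost $\sum_{e\in E_F}c(e)+\sum_{v\in V\setminus V_F}\pi(v)$; $\mathrm{OPT}$ is the minimum cost. The PCST instance $(G,r,c,\pi)$ is the same problem without the constraint $|V_F|\ge k$; the rooted $k$-MST instance $(G,r,k,c)$ asks for a subtree containing $r$ with at least $k$ vertices minimizing total edge cost. Procedure 1 is the Goemans–Williamson primal-dual algorithm for PCST, which returns a subtree $F=(V_F,E_F)$ containing $r$ whose PCST cost is at most $2$ times the optimal PCST value. Procedure 2 is Garg's primal-dual algorithm for rooted $k$-MST, which returns a subtree containing $r$ with at least $k$ vertices whose edge cost is at most $2$ times the optimal rooted $k$-MST value. Algorithm $\mathcal{A}$: Step 1: apply Procedure 1 to $(G,r,c,\pi)$ obtaining $F_{\mathrm{PCST}}=(V_{\mathrm{PCST}},E_{\mathrm{PCST}})$;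 if $|V_{\mathrm{PCST}}|\ge k$, return $F_{\mathrm{PCST}}$; otherwise go to Step 2. Step 2: apply Procedure 2 to $(G,r,k,c)$ obtaining $F_{k\text{-MST}}=(V_{k\text{-MST}},E_{k\text{-MST}})$. Step 3: form the graph $G'=(V_{\mathrm{PCST}}\cup V_{k\text{-MST}},E_{\mathrm{PCST}}\cup E_{k\text{-MST}})$, compute a minimum spanning tree $F_{\mathrm{OUT}}$ of $G'$ with respect to $c$, and return it (termination at Step 3). *)

theory Defs
  imports Complex_Main
begin

definition is_graph :: "'a set \<Rightarrow> 'a set set \<Rightarrow> bool" where
  "is_graph V E \<longleftrightarrow> finite V \<and> (\<forall>e\<in>E. \<exists>u v. e = {u, v} \<and> u \<noteq> v \<and> u \<in> V \<and> v \<in> V)"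

definition adj :: "'a set set \<Rightarrow> 'a \<Rightarrow> 'a \<Rightarrow> bool" where
  "adj E u v \<longleftrightarrow> u \<noteq> v \<and> {u, v} \<in> E"

definition connected_graph :: "'a set \<Rightarrow> 'a set set \<Rightarrow> bool" where
  "connected_graph V E \<longleftrightarrow> is_graph V E \<and> V \<noteq> {} \<and>
     (\<forall>u\<in>V. \<forall>v\<in>V. (adj E)\<^sup>*\<^sup>* u v)"

text \<open>A tree: a connected graph which becomes disconnected upon removing any edge
  (minimally connected, i.e. connected and acyclic).\<close>
definition is_tree :: "'a set \<Rightarrow> 'a set set \<Rightarrow> bool" where
  "is_tree V E \<longleftrightarrow> connected_graph V E \<and> (\<forall>e\<in>E. \<not> connected_graph V (E - {e}))"

definition subtree :: "'a set \<Rightarrow> 'a set set \<Rightarrow> 'a set \<Rightarrow> 'a set set \<Rightarrow> bool" where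
  "subtree V E VF EF \<longleftrightarrow> VF \<subseteq> V \<and> EF \<subseteq> E \<and> is_tree VF EF"

definition kpcst_feasible :: "'a set \<Rightarrow> 'a set set \<Rightarrow> 'a \<Rightarrow> nat \<Rightarrow> 'a set \<Rightarrow> 'a set set \<Rightarrow> bool" where
  "kpcst_feasible V E r k VF EF \<longleftrightarrow> subtree V E VF EF \<and> r \<in> VF \<and> k \<le> card VF"

definition pcst_cost :: "('a set \<Rightarrow> real) \<Rightarrow> ('a \<Rightarrow> real) \<Rightarrow> 'a set \<Rightarrow> 'a set \<Rightarrow> 'a set set \<Rightarrow> real" where
  "pcst_cost c \<pi> V VF EF = (\<Sum>e\<in>EF. c e) + (\<Sum>v\<in>V - VF. \<pi> v)"

definition OPT_kpcst :: "'a set \<Rightarrow> 'a set set \<Rightarrow> 'a \<Rightarrow> nat \<Rightarrow> ('a set \<Rightarrow> real) \<Rightarrow> ('a \<Rightarrow> real) \<Rightarrow> real" where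
  "OPT_kpcst V E r k c \<pi> = Inf {pcst_cost c \<pi> V VF EF | VF EF. kpcst_feasible V E r k VF EF}"

definition OPT_pcst :: "'a set \<Rightarrow> 'a set set \<Rightarrow> 'a \<Rightarrow> ('a set \<Rightarrow> real) \<Rightarrow> ('a \<Rightarrow> real) \<Rightarrow> real" where
  "OPT_pcst V E r c \<pi> = Inf {pcst_cost c \<pi> V VF EF | VF EF. subtree V E VF EF \<and> r \<in> VF}"

definition OPT_kmst :: "'a set \<Rightarrow> 'a set set \<Rightarrow> 'a \<Rightarrow> nat \<Rightarrow> ('a set \<Rightarrow> real) \<Rightarrow> real" where
  "OPT_kmst V E r k c = Inf {(\<Sum>e\<in>EF. c e) | VF EF. kpcst_feasible V E r k VF EF}"

definition is_mst :: "'a set \<Rightarrow> 'a set set \<Rightarrow> ('a set \<Rightarrow> real) \<Rightarrow> 'a set set \<Rightarrow> bool" where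
  "is_mst V' E' c T \<longleftrightarrow> T \<subseteq> E' \<and> is_tree V' T \<and>
     (\<forall>T'. T' \<subseteq> E' \<and> is_tree V' T' \<longrightarrow> (\<Sum>e\<in>T. c e) \<le> (\<Sum>e\<in>T'. c e))"

end

theory Submission
  imports Defs
begin

(* F_OUT only uses edges of the two trees, so its cost is at most the PCST cost of F_PCST plus
   the edge cost of F_kMST; the covered vertex set only grows, so no new penalties are paid.
   Both relaxations (PCST drops the size constraint, rooted k-MST drops the penalties) have
   optimum at most OPT, hence the total is at most 2 OPT + 2 OPT. *)

lemma is_graph_finite_edges:
  assumes "is_graph V E"
  shows "finite E"
proof -
  have "E \<subseteq> Pow V"
    using assms unfolding is_graph_def by auto
  moreover have "finite V"
    using assms unfolding is_graph_def by blast
  ultimately show ?thesis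
    by (meson finite_Pow_iff finite_subset)
qed

lemma sum_subset_union_le:
  fixes f :: "'b \<Rightarrow> real"
  assumes "finite A" "finite B" "T \<subseteq> A \<union> B" "\<forall>x\<in>A \<union> B. 0 \<le> f x"
  shows "sum f T \<le> sum f A + sum f B"
proof -
  have "sum f T \<le> sum f (A \<union> B)"
    using assms by (intro sum_mono2) auto
  also have "\<dots> + sum f (A \<inter> B) = sum f A + sum f B"
    using assms(1,2) by (rule sum.union_inter)
  moreover have "0 \<le> sum f (A \<inter> B)"
    using assms(4) by (intro sum_nonneg) auto
  ultimately show ?thesis
    by linarith
qed

lemma pcst_cost_nonneg:
  assumes "subtree V E VF EF" "\<forall>e\<in>E. 0 \<le> c e" "\<forall>v\<in>V. 0 \<le> \<pi> v"
  shows "0 \<le> pcst_cost c \<pi> V VF EF"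
  using assms unfolding pcst_cost_def subtree_def
  by (intro add_nonneg_nonneg sum_nonneg) auto

lemma kpcst_feasible_mst_of_union:
  assumes "finite V" "subtree V E V1 E1" "kpcst_feasible V E r k V2 E2"
    and "is_mst (V1 \<union> V2) (E1 \<union> E2) c T"
  shows "kpcst_feasible V E r k (V1 \<union> V2) T"
proof -
  have "V1 \<union> V2 \<subseteq> V" "T \<subseteq> E" "is_tree (V1 \<union> V2) T"
    using assms(2-4) unfolding kpcst_feasible_def subtree_def is_mst_def by auto
  moreover have "k \<le> card (V1 \<union> V2)"
    using assms(1,3) card_mono[of "V1 \<union> V2" V2] \<open>V1 \<union> V2 \<subseteq> V\<close>
    unfolding kpcst_feasible_def by (meson finite_subset le_trans sup_ge2)
  ultimately show ?thesis
    using assms(3) unfolding kpcst_feasible_def subtree_def by blast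
qed

lemma pcst_cost_mst_of_union_le:
  assumes "is_graph V E" "\<forall>e\<in>E. 0 \<le> c e" "\<forall>v\<in>V. 0 \<le> \<pi> v"
    and "subtree V E V1 E1" "subtree V E V2 E2"
    and "is_mst (V1 \<union> V2) (E1 \<union> E2) c T"
  shows "pcst_cost c \<pi> V (V1 \<union> V2) T \<le> pcst_cost c \<pi> V V1 E1 + (\<Sum>e\<in>E2. c e)"
proof -
  have "finite E1" "finite E2"
    using assms(4,5) is_graph_finite_edges[OF assms(1)] unfolding subtree_def
    by (auto intro: finite_subset)
  then have edges: "(\<Sum>e\<in>T. c e) \<le> (\<Sum>e\<in>E1. c e) + (\<Sum>e\<in>E2. c e)"
    using assms(2,4-6) unfolding subtree_def is_mst_def
    by (intro sum_subset_union_le) auto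
  have penalties: "(\<Sum>v\<in>V - (V1 \<union> V2). \<pi> v) \<le> (\<Sum>v\<in>V - V1. \<pi> v)"
    using assms(1,3) unfolding is_graph_def by (intro sum_mono2) auto
  show ?thesis
    using edges penalties unfolding pcst_cost_def by linarith
qed

lemma OPT_pcst_le_OPT_kpcst:
  assumes "kpcst_feasible V E r k VF EF" "\<forall>e\<in>E. 0 \<le> c e" "\<forall>v\<in>V. 0 \<le> \<pi> v"
  shows "OPT_pcst V E r c \<pi> \<le> OPT_kpcst V E r k c \<pi>"
  unfolding OPT_pcst_def OPT_kpcst_def
proof (rule cInf_mono)
  show "{pcst_cost c \<pi> V VF EF |VF EF. kpcst_feasible V E r k VF EF} \<noteq> {}"
    using assms(1) by blast
  show "bdd_below {pcst_cost c \<pi> V VF EF |VF EF. subtree V E VF EF \<and> r \<in> VF}"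
    using pcst_cost_nonneg[OF _ assms(2,3)] by (intro bdd_belowI[of _ 0]) blast
qed (auto simp: kpcst_feasible_def)

lemma OPT_kmst_le_OPT_kpcst:
  assumes "kpcst_feasible V E r k VF EF" "\<forall>e\<in>E. 0 \<le> c e" "\<forall>v\<in>V. 0 \<le> \<pi> v"
  shows "OPT_kmst V E r k c \<le> OPT_kpcst V E r k c \<pi>"
  unfolding OPT_kmst_def OPT_kpcst_def
proof (rule cInf_mono)
  show "{pcst_cost c \<pi> V VF EF |VF EF. kpcst_feasible V E r k VF EF} \<noteq> {}"
    using assms(1) by blast
  show "bdd_below {\<Sum>e\<in>EF. c e |VF EF. kpcst_feasible V E r k VF EF}"
    using assms(2) unfolding kpcst_feasible_def subtree_def
    by (intro bdd_belowI[of _ 0]) (auto intro!: sum_nonneg)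
next
  fix b
  assume "b \<in> {pcst_cost c \<pi> V VF EF |VF EF. kpcst_feasible V E r k VF EF}"
  then obtain VF EF where b: "b = pcst_cost c \<pi> V VF EF" "kpcst_feasible V E r k VF EF"
    by blast
  have "0 \<le> (\<Sum>v\<in>V - VF. \<pi> v)"
    using assms(3) by (intro sum_nonneg) auto
  then have "(\<Sum>e\<in>EF. c e) \<le> b"
    unfolding b pcst_cost_def by linarith
  with b(2) show "\<exists>a\<in>{\<Sum>e\<in>EF. c e |VF EF. kpcst_feasible V E r k VF EF}. a \<le> b"
    by blast
qed

theorem theorem2:
  fixes V :: "'a set" and E :: "'a set set" and r :: 'a and k :: nat
    and c :: "'a set \<Rightarrow> real" and \<pi> :: "'a \<Rightarrow> real"
    and V_PCST :: "'a set" and E_PCST :: "'a set set"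
    and V_kMST :: "'a set" and E_kMST :: "'a set set"
    and E_OUT :: "'a set set"
  assumes G: "connected_graph V E" and root: "r \<in> V"
    and c_nonneg: "\<forall>e\<in>E. 0 \<le> c e" and pi_nonneg: "\<forall>v\<in>V. 0 \<le> \<pi> v"
    \<comment> \<open>Step 1: output of Procedure 1 (Goemans--Williamson) with its guarantee\<close>
    and P1: "subtree V E V_PCST E_PCST" "r \<in> V_PCST"
       "pcst_cost c \<pi> V V_PCST E_PCST \<le> 2 * OPT_pcst V E r c \<pi>"
    \<comment> \<open>the algorithm does not stop at Step 1\<close>
    and step3: "card V_PCST < k"
    \<comment> \<open>Step 2: output of Procedure 2 (Garg) with its guarantee\<close>
    and P2: "kpcst_feasible V E r k V_kMST E_kMST"
       "(\<Sum>e\<in>E_kMST. c e) \<le> 2 * OPT_kmst V E r k c"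
    \<comment> \<open>Step 3: F_OUT is a minimum spanning tree of G'\<close>
    and OUT: "is_mst (V_PCST \<union> V_kMST) (E_PCST \<union> E_kMST) c E_OUT"
  shows "kpcst_feasible V E r k (V_PCST \<union> V_kMST) E_OUT \<and>
         pcst_cost c \<pi> V (V_PCST \<union> V_kMST) E_OUT \<le> 4 * OPT_kpcst V E r k c \<pi>"
proof
  have graph: "is_graph V E"
    using G unfolding connected_graph_def by blast
  then show "kpcst_feasible V E r k (V_PCST \<union> V_kMST) E_OUT"
    using kpcst_feasible_mst_of_union[OF _ P1(1) P2(1) OUT] unfolding is_graph_def by blast
  have "subtree V E V_kMST E_kMST"
    using P2(1) unfolding kpcst_feasible_def by blast
  then have "pcst_cost c \<pi> V (V_PCST \<union> V_kMST) E_OUT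
      \<le> pcst_cost c \<pi> V V_PCST E_PCST + (\<Sum>e\<in>E_kMST. c e)"
    by (rule pcst_cost_mst_of_union_le[OF graph c_nonneg pi_nonneg P1(1) _ OUT])
  moreover have "OPT_pcst V E r c \<pi> \<le> OPT_kpcst V E r k c \<pi>"
    by (rule OPT_pcst_le_OPT_kpcst[OF P2(1) c_nonneg pi_nonneg])
  moreover have "OPT_kmst V E r k c \<le> OPT_kpcst V E r k c \<pi>"
    by (rule OPT_kmst_le_OPT_kpcst[OF P2(1) c_nonneg pi_nonneg])
  ultimately show "pcst_cost c \<pi> V (V_PCST \<union> V_kMST) E_OUT \<le> 4 * OPT_kpcst V E r k c \<pi>"
    using P1(3) P2(2) by linarith
qed

end
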